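(* Let $\{A_n\}_{n\geqslant 1}$ be i.i.d. nonnegative random variables with Laplace–Stieltjes transform $\alpha(s)=\mathbb{E}[e^{-sA_1}]$, and let $\{B_n\}_{n\geqslant 1}$ be i.i.d. exponentially distributed with rate $\mu>0$, independent of $\{A_n\}$. Let $W_1\geqslant 0$ be independent of $\{A_n\},\{B_n\}$, and let $W_{n+1}=\max\{0,\,B_{n+1}-A_n-W_n\}$ for $n\geqslant 1$. Suppose the process $\{W_n\}_{n\geqslant1}$ is stationary (equivalently, $\mathbb{P}[W_1>0]=2\alpha(\mu)/(2+\alpha(\mu))$ and, given $W_1>0$, $W_1$ is exponentially distributed with rate $\mu$). Then for every $k\geqslant 1$, $$\operatorname{cov}[W_1,W_{1+k}]=\frac{2\alpha(\mu)}{2+\alpha(\mu)}\left(\frac32-\frac{2\alpha(\mu)}{2+\alpha(\mu)}\right)\frac{1}{\mu^2}\left(-\frac{\alpha(\mu)}{2}\right)^{k}.$$ *)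

theory Defs
  imports "HOL-Probability.Probability"
begin

text \<open>The recursion W_1 given, W_(n+1) = max 0 (B_(n+1) - A_n - W_n) for n >= 1.
  Index 0 is unused (set to 0); all indices of interest are >= 1.\<close>
fun Wseq :: "(nat \<Rightarrow> 'a \<Rightarrow> real) \<Rightarrow> (nat \<Rightarrow> 'a \<Rightarrow> real) \<Rightarrow> ('a \<Rightarrow> real) \<Rightarrow> nat \<Rightarrow> 'a \<Rightarrow> real" where
  "Wseq A B W1 0 = (\<lambda>_. 0)"
| "Wseq A B W1 (Suc 0) = W1"
| "Wseq A B W1 (Suc (Suc n)) =
     (\<lambda>\<omega>. max 0 (B (Suc (Suc n)) \<omega> - A (Suc n) \<omega> - Wseq A B W1 (Suc n) \<omega>))"

definition covariance :: "'a measure \<Rightarrow> ('a \<Rightarrow> real) \<Rightarrow> ('a \<Rightarrow> real) \<Rightarrow> real" where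
  "covariance M X Y =
     (\<integral>\<omega>. (X \<omega> - (\<integral>x. X x \<partial>M)) * (Y \<omega> - (\<integral>x. Y x \<partial>M)) \<partial>M)"

definition stationary_process :: "'a measure \<Rightarrow> (nat \<Rightarrow> 'a \<Rightarrow> real) \<Rightarrow> bool" where
  "stationary_process M X \<longleftrightarrow>
     (\<forall>m::nat. \<forall>J. finite J \<and> J \<subseteq> {1..} \<longrightarrow>
        distr M (PiM J (\<lambda>_. borel)) (\<lambda>\<omega>. \<lambda>i\<in>J. X (i + m) \<omega>)
      = distr M (PiM J (\<lambda>_. borel)) (\<lambda>\<omega>. \<lambda>i\<in>J. X i \<omega>))"

definition driving_family ::
  "(nat \<Rightarrow> 'a \<Rightarrow> real) \<Rightarrow> (nat \<Rightarrow> 'a \<Rightarrow> real) \<Rightarrow> ('a \<Rightarrow> real) \<Rightarrow> nat + nat + unit \<Rightarrow> 'a \<Rightarrow> real" where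
  "driving_family A B W1 i = (case i of Inl n \<Rightarrow> A n | Inr (Inl n) \<Rightarrow> B n | Inr (Inr _) \<Rightarrow> W1)"

definition driving_index :: "(nat + nat + unit) set" where
  "driving_index = Inl ` {1..} \<union> Inr ` Inl ` {1..} \<union> {Inr (Inr ())}"

end

theory Submission
  imports Defs
begin

text \<open>
  Fix m \<ge> 1 and put c = A m + W m \<ge> 0, so that W (m+1) = max 0 (B (m+1) - c). The variable
  B (m+1) is exponential and independent of (W 1, A m, W m); by memorylessness, integrating it
  out turns W (m+1), exp (-\<mu> W (m+1)) and W (m+1) exp (-\<mu> W (m+1)) into exp (-\<mu> c) / \<mu>,
  1 - exp (-\<mu> c) / 2 and exp (-\<mu> c) / (4\<mu>). Integrating out A m, which is independent of
  (W 1, W m), then turns exp (-\<mu> c) into \<alpha> exp (-\<mu> W m). Hence for every \<psi> \<ge> 0 the numbers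
  x m = E[\<psi>(W 1) exp (-\<mu> W m)] satisfy x (m+1) + \<alpha>/2 x m = E[\<psi>(W 1)], and
  E[\<psi>(W 1) W (m+1)] = \<alpha>/\<mu> x m.

  For \<psi> = 1, stationarity (W 2 and W 1 have the same law) forces the constant solution
  E[exp (-\<mu> W m)] = 1 - \<rho>/2 with \<rho> = 2\<alpha>/(2 + \<alpha>), hence E[W m] = \<rho>/\<mu>. For \<psi>(w) = w the
  recursion starts from E[W 1 exp (-\<mu> W 1)] = E[W 2 exp (-\<mu> W 2)] = \<rho>/(4\<mu>); solving it gives
  E[W 1 W (1+k)] and hence the covariance.
\<close>

section \<open>Integrals against the exponential density\<close>

lemma exponential_density_mult_exp:
  assumes "0 < l"
  shows "exponential_density l x * exp (- l * x) = exponential_density (2 * l) x / 2"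
  using assms by (simp add: exponential_density_def exp_add[symmetric] algebra_simps)

text \<open>Memorylessness of the exponential law, in integrated form.\<close>

lemma nn_integral_exponential_density_pos_part:
  fixes \<phi> :: "real \<Rightarrow> ennreal"
  assumes l: "0 < l" and c: "0 \<le> c" and [measurable]: "\<phi> \<in> borel_measurable borel"
  shows "(\<integral>\<^sup>+b. ennreal (exponential_density l b) * \<phi> (max 0 (b - c)) \<partial>lborel)
       = ennreal (1 - exp (- l * c)) * \<phi> 0
         + ennreal (exp (- l * c)) * (\<integral>\<^sup>+t. ennreal (exponential_density l t) * \<phi> t \<partial>lborel)"
proof -
  have below: "(\<integral>\<^sup>+b. ennreal (exponential_density l b) * indicator {..c} b \<partial>lborel)
      = ennreal (1 - exp (- l * c))"
    using nn_integral_erlang_density[OF l, of 0 c] c by (simp add: erlang_CDF_def)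
  have "(\<integral>\<^sup>+b. ennreal (exponential_density l b) * \<phi> (b - c) * indicator {c<..} b \<partial>lborel)
      = (\<integral>\<^sup>+t. ennreal (exponential_density l (c + t)) * \<phi> t * indicator {0<..} t \<partial>lborel)"
    by (subst nn_integral_real_affine[where c=1 and t=c]) (auto simp: indicator_def)
  also have "\<dots> = (\<integral>\<^sup>+t. ennreal (exp (- l * c)) * (ennreal (exponential_density l t) * \<phi> t) \<partial>lborel)"
  proof (rule nn_integral_cong_AE)
    show "AE t in lborel. ennreal (exponential_density l (c + t)) * \<phi> t * indicator {0<..} t
        = ennreal (exp (- l * c)) * (ennreal (exponential_density l t) * \<phi> t)"
      using AE_lborel_singleton[of 0] by eventually_elim
        (use c l in \<open>auto simp: exponential_density_def ennreal_mult[symmetric] exp_add[symmetric]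
          algebra_simps split: split_indicator\<close>)
  qed
  also have "\<dots> = ennreal (exp (- l * c)) * (\<integral>\<^sup>+t. ennreal (exponential_density l t) * \<phi> t \<partial>lborel)"
    by (rule nn_integral_cmult) measurable
  finally have above:
    "(\<integral>\<^sup>+b. ennreal (exponential_density l b) * \<phi> (b - c) * indicator {c<..} b \<partial>lborel) = \<dots>" .
  have "(\<integral>\<^sup>+b. ennreal (exponential_density l b) * \<phi> (max 0 (b - c)) \<partial>lborel)
      = (\<integral>\<^sup>+b. ennreal (exponential_density l b) * indicator {..c} b * \<phi> 0
               + ennreal (exponential_density l b) * \<phi> (b - c) * indicator {c<..} b \<partial>lborel)"
    by (intro nn_integral_cong) (auto split: split_indicator)
  also have "\<dots> = (\<integral>\<^sup>+b. ennreal (exponential_density l b) * indicator {..c} b \<partial>lborel) * \<phi> 0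
      + (\<integral>\<^sup>+b. ennreal (exponential_density l b) * \<phi> (b - c) * indicator {c<..} b \<partial>lborel)"
    by (simp add: nn_integral_add nn_integral_multc)
  finally show ?thesis by (simp only: below above)
qed

lemma nn_integral_exponential_density_moment_1:
  assumes "0 < l"
  shows "(\<integral>\<^sup>+t. ennreal (exponential_density l t) * ennreal t \<partial>lborel) = ennreal (1 / l)"
proof -
  have "(\<integral>\<^sup>+t. ennreal (exponential_density l t) * ennreal t \<partial>lborel)
      = (\<integral>\<^sup>+t. ennreal (exponential_density l t * t ^ 1) \<partial>lborel)"
    using assms by (intro nn_integral_cong) (auto simp: exponential_density_def ennreal_mult'[symmetric])
  also have "\<dots> = ennreal (1 / l)"
    using nn_integral_erlang_ith_moment[OF assms, of 0 1] by simp
  finally show ?thesis .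
qed

lemma nn_integral_exponential_density_exp:
  assumes l: "0 < l"
  shows "(\<integral>\<^sup>+t. ennreal (exponential_density l t) * ennreal (exp (- l * t)) \<partial>lborel) = ennreal (1 / 2)"
proof -
  have "(\<integral>\<^sup>+t. ennreal (exponential_density l t) * ennreal (exp (- l * t)) \<partial>lborel)
      = (\<integral>\<^sup>+t. ennreal (1 / 2) * ennreal (exponential_density (2 * l) t * t ^ 0) \<partial>lborel)"
    using l by (intro nn_integral_cong)
      (simp add: ennreal_mult[symmetric] exponential_density_nonneg
        exponential_density_mult_exp[OF l, simplified] del: ennreal_half)
  also have "\<dots> = ennreal (1 / 2)"
    using l nn_integral_erlang_ith_moment[of "2 * l" 0 0] by (simp add: nn_integral_cmult del: ennreal_half)
  finally show ?thesis .
qed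

lemma nn_integral_exponential_density_mult_exp:
  assumes l: "0 < l"
  shows "(\<integral>\<^sup>+t. ennreal (exponential_density l t) * ennreal (t * exp (- l * t)) \<partial>lborel)
       = ennreal (1 / (4 * l))"
proof -
  have "(\<integral>\<^sup>+t. ennreal (exponential_density l t) * ennreal (t * exp (- l * t)) \<partial>lborel)
      = (\<integral>\<^sup>+t. ennreal (1 / 2) * ennreal (exponential_density (2 * l) t * t ^ 1) \<partial>lborel)"
  proof (rule nn_integral_cong)
    fix t :: real
    show "ennreal (exponential_density l t) * ennreal (t * exp (- l * t))
        = ennreal (1 / 2) * ennreal (exponential_density (2 * l) t * t ^ 1)"
      using l exponential_density_mult_exp[OF l, of t]
      by (cases "t < 0")
        (auto simp: exponential_density_def ennreal_mult[symmetric] mult_ac simp del: ennreal_half)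
  qed
  also have "\<dots> = ennreal (1 / (4 * l))"
    using l nn_integral_erlang_ith_moment[of "2 * l" 0 1]
    by (simp add: nn_integral_cmult ennreal_mult[symmetric] del: ennreal_half)
  finally show ?thesis .
qed

lemma nn_integral_exponential_density_pos_part_id:
  assumes "0 < l" "0 \<le> c"
  shows "(\<integral>\<^sup>+b. ennreal (exponential_density l b) * ennreal (max 0 (b - c)) \<partial>lborel)
       = ennreal (exp (- l * c) / l)"
proof -
  have "(\<integral>\<^sup>+b. ennreal (exponential_density l b) * ennreal (max 0 (b - c)) \<partial>lborel)
      = ennreal (1 - exp (- l * c)) * ennreal 0
        + ennreal (exp (- l * c)) * (\<integral>\<^sup>+t. ennreal (exponential_density l t) * ennreal t \<partial>lborel)"
    by (rule nn_integral_exponential_density_pos_part[OF assms]) measurable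
  also have "\<dots> = ennreal (exp (- l * c) / l)"
    using assms by (simp only: nn_integral_exponential_density_moment_1) (simp add: ennreal_mult[symmetric])
  finally show ?thesis .
qed

lemma nn_integral_exponential_density_exp_pos_part:
  assumes "0 < l" "0 \<le> c"
  shows "(\<integral>\<^sup>+b. ennreal (exponential_density l b) * ennreal (exp (- l * max 0 (b - c))) \<partial>lborel)
       = ennreal (1 - exp (- l * c) / 2)"
proof -
  have "(\<integral>\<^sup>+b. ennreal (exponential_density l b) * ennreal (exp (- l * max 0 (b - c))) \<partial>lborel)
      = ennreal (1 - exp (- l * c)) * ennreal (exp (- l * 0))
        + ennreal (exp (- l * c))
          * (\<integral>\<^sup>+t. ennreal (exponential_density l t) * ennreal (exp (- l * t)) \<partial>lborel)"
    by (rule nn_integral_exponential_density_pos_part[OF assms]) measurable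
  also have "\<dots> = ennreal (1 - exp (- l * c) / 2)"
    using assms by (simp only: nn_integral_exponential_density_exp)
      (simp add: ennreal_mult[symmetric] ennreal_plus[symmetric] del: ennreal_plus ennreal_half)
  finally show ?thesis .
qed

lemma nn_integral_exponential_density_pos_part_mult_exp:
  assumes "0 < l" "0 \<le> c"
  shows "(\<integral>\<^sup>+b. ennreal (exponential_density l b)
           * ennreal (max 0 (b - c) * exp (- l * max 0 (b - c))) \<partial>lborel)
       = ennreal (exp (- l * c) / (4 * l))"
proof -
  have "(\<integral>\<^sup>+b. ennreal (exponential_density l b)
           * ennreal (max 0 (b - c) * exp (- l * max 0 (b - c))) \<partial>lborel)
      = ennreal (1 - exp (- l * c)) * ennreal (0 * exp (- l * 0))
        + ennreal (exp (- l * c))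
          * (\<integral>\<^sup>+t. ennreal (exponential_density l t) * ennreal (t * exp (- l * t)) \<partial>lborel)"
    by (rule nn_integral_exponential_density_pos_part[OF assms]) measurable
  also have "\<dots> = ennreal (exp (- l * c) / (4 * l))"
    using assms by (simp only: nn_integral_exponential_density_mult_exp) (simp add: ennreal_mult[symmetric])
  finally show ?thesis .
qed

section \<open>Integrating out independent variables\<close>

lemma (in prob_space) nn_integral_indep_var:
  assumes indep: "indep_var N X N' Y" and F: "F \<in> borel_measurable (N \<Otimes>\<^sub>M N')"
  shows "(\<integral>\<^sup>+\<omega>. F (X \<omega>, Y \<omega>) \<partial>M) = (\<integral>\<^sup>+\<omega>. (\<integral>\<^sup>+y. F (X \<omega>, y) \<partial>distr M N' Y) \<partial>M)"
proof -
  have X: "random_variable N X" and Y: "random_variable N' Y"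
    and joint: "distr M N X \<Otimes>\<^sub>M distr M N' Y = distr M (N \<Otimes>\<^sub>M N') (\<lambda>\<omega>. (X \<omega>, Y \<omega>))"
    using indep unfolding indep_var_distribution_eq by auto
  interpret Y: prob_space "distr M N' Y" using Y by (rule prob_space_distr)
  have "(\<integral>\<^sup>+\<omega>. F (X \<omega>, Y \<omega>) \<partial>M) = integral\<^sup>N (distr M (N \<Otimes>\<^sub>M N') (\<lambda>\<omega>. (X \<omega>, Y \<omega>))) F"
    using X Y F by (subst nn_integral_distr) auto
  also have "\<dots> = (\<integral>\<^sup>+x. \<integral>\<^sup>+y. F (x, y) \<partial>distr M N' Y \<partial>distr M N X)"
    using F by (simp only: joint[symmetric]) (subst Y.nn_integral_fst; auto cong: measurable_cong_sets)
  also have "\<dots> = (\<integral>\<^sup>+\<omega>. (\<integral>\<^sup>+y. F (X \<omega>, y) \<partial>distr M N' Y) \<partial>M)"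
    using X F by (subst nn_integral_distr)
      (auto intro!: Y.borel_measurable_nn_integral_fst[where f=F] cong: measurable_cong_sets)
  finally show ?thesis .
qed

lemma (in prob_space) nn_integral_indep_vars_integrate_out:
  fixes X :: "'i \<Rightarrow> 'a \<Rightarrow> real"
  assumes indep: "indep_vars (\<lambda>_. borel) X I" and j: "j \<in> I"
    and F[measurable]: "F \<in> borel_measurable (PiM (I - {j}) (\<lambda>_. borel) \<Otimes>\<^sub>M borel)"
  shows "(\<integral>\<^sup>+\<omega>. F (restrict (\<lambda>i. X i \<omega>) (I - {j}), X j \<omega>) \<partial>M)
       = (\<integral>\<^sup>+\<omega>. (\<integral>\<^sup>+y. F (restrict (\<lambda>i. X i \<omega>) (I - {j}), y) \<partial>distr M borel (X j)) \<partial>M)"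
proof -
  have Xj[measurable]: "X j \<in> borel_measurable M"
    using indep j unfolding indep_vars_def by auto
  have "indep_var (PiM (I - {j}) (\<lambda>_. borel)) (\<lambda>\<omega>. restrict (\<lambda>i. X i \<omega>) (I - {j}))
      (PiM {j} (\<lambda>_. borel)) (\<lambda>\<omega>. restrict (\<lambda>i. X i \<omega>) {j})"
    using j by (intro indep_var_restrict[OF indep]) auto
  from nn_integral_indep_var[OF this, of "\<lambda>(x, v). F (x, v j)"]
  have "(\<integral>\<^sup>+\<omega>. F (restrict (\<lambda>i. X i \<omega>) (I - {j}), X j \<omega>) \<partial>M)
      = (\<integral>\<^sup>+\<omega>. (\<integral>\<^sup>+v. F (restrict (\<lambda>i. X i \<omega>) (I - {j}), v j)
             \<partial>distr M (PiM {j} (\<lambda>_. borel)) (\<lambda>\<omega>. restrict (\<lambda>i. X i \<omega>) {j})) \<partial>M)"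
    by simp
  also have "\<dots> = (\<integral>\<^sup>+\<omega>. (\<integral>\<^sup>+y. F (restrict (\<lambda>i. X i \<omega>) (I - {j}), y) \<partial>distr M borel (X j)) \<partial>M)"
  proof (intro nn_integral_cong)
    fix \<omega>
    define g where "g y = F (restrict (\<lambda>i. X i \<omega>) (I - {j}), y)" for y
    have [measurable]: "g \<in> borel_measurable borel"
      unfolding g_def by (rule measurable_Pair2[OF F]) (simp add: space_PiM)
    show "(\<integral>\<^sup>+v. F (restrict (\<lambda>i. X i \<omega>) (I - {j}), v j)
             \<partial>distr M (PiM {j} (\<lambda>_. borel)) (\<lambda>\<omega>. restrict (\<lambda>i. X i \<omega>) {j}))
        = (\<integral>\<^sup>+y. F (restrict (\<lambda>i. X i \<omega>) (I - {j}), y) \<partial>distr M borel (X j))"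
      unfolding g_def[symmetric] by (subst (1 2) nn_integral_distr) (auto intro!: measurable_restrict)
  qed
  finally show ?thesis .
qed

section \<open>The recursion as a function of the driving variables\<close>

text \<open>Expressing W m through the vector of driving values is what allows the independence of the
  driving family to be applied to functions of W m.\<close>

fun Wseq_vec :: "nat \<Rightarrow> (nat + nat + unit \<Rightarrow> real) \<Rightarrow> real" where
  "Wseq_vec 0 x = 0"
| "Wseq_vec (Suc 0) x = x (Inr (Inr ()))"
| "Wseq_vec (Suc (Suc n)) x = max 0 (x (Inr (Inl (Suc (Suc n)))) - x (Inl (Suc n)) - Wseq_vec (Suc n) x)"

lemma Wseq_eq_Wseq_vec: "Wseq A B W1 m \<omega> = Wseq_vec m (\<lambda>i. driving_family A B W1 i \<omega>)"
  by (induction m rule: induct_nat_012) (auto simp: driving_family_def)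

lemma Wseq_vec_cong:
  assumes "\<And>n. 1 \<le> n \<Longrightarrow> n < m \<Longrightarrow> x (Inl n) = y (Inl n)"
    and "\<And>n. 2 \<le> n \<Longrightarrow> n \<le> m \<Longrightarrow> x (Inr (Inl n)) = y (Inr (Inl n))"
    and "1 \<le> m \<Longrightarrow> x (Inr (Inr ())) = y (Inr (Inr ()))"
  shows "Wseq_vec m x = Wseq_vec m y"
  using assms by (induction m rule: induct_nat_012) auto

lemma borel_measurable_component_PiM:
  "(\<lambda>x. x i) \<in> borel_measurable (PiM K (\<lambda>_. borel :: real measure))"
proof (cases "i \<in> K")
  case False
  then have "(\<lambda>x. x i) \<in> borel_measurable (PiM K (\<lambda>_. borel :: real measure)) \<longleftrightarrow>
      (\<lambda>x. undefined :: real) \<in> borel_measurable (PiM K (\<lambda>_. borel :: real measure))"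
    by (intro measurable_cong) (auto simp: space_PiM PiE_def extensional_def)
  then show ?thesis by simp
qed (rule measurable_component_singleton)

lemma borel_measurable_Wseq_vec[measurable]:
  "Wseq_vec m \<in> borel_measurable (PiM K (\<lambda>_. borel :: real measure))"
proof (induction m rule: induct_nat_012)
  case (ge2 n)
  then show ?case
    by (simp add: Wseq_vec.simps(3)[abs_def])
      (intro borel_measurable_max borel_measurable_diff borel_measurable_const
        borel_measurable_component_PiM)
qed (simp_all add: Wseq_vec.simps(1,2)[abs_def] borel_measurable_component_PiM)

section \<open>One step of the recursion\<close>

locale driving_model = prob_space M for M :: "'a measure" +
  fixes A B :: "nat \<Rightarrow> 'a \<Rightarrow> real" and W1 :: "'a \<Rightarrow> real" and \<mu> :: real
  assumes mu_pos: "0 < \<mu>"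
    and A_rv: "\<And>n. 1 \<le> n \<Longrightarrow> A n \<in> borel_measurable M"
    and A_nonneg: "\<And>n. 1 \<le> n \<Longrightarrow> AE \<omega> in M. 0 \<le> A n \<omega>"
    and A_ident: "\<And>n. 1 \<le> n \<Longrightarrow> distr M borel (A n) = distr M borel (A 1)"
    and B_exp: "\<And>n. 1 \<le> n \<Longrightarrow> distributed M lborel (B n) (exponential_density \<mu>)"
    and W1_rv: "W1 \<in> borel_measurable M"
    and W1_nonneg: "AE \<omega> in M. 0 \<le> W1 \<omega>"
    and indep: "indep_vars (\<lambda>_. borel) (driving_family A B W1) driving_index"
begin

abbreviation "W \<equiv> Wseq A B W1"

abbreviation "\<alpha> \<equiv> \<integral>\<omega>. exp (- \<mu> * A 1 \<omega>) \<partial>M"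

abbreviation "driving_without j \<omega> \<equiv> restrict (\<lambda>i. driving_family A B W1 i \<omega>) (driving_index - {j})"

lemma B_rv: "1 \<le> n \<Longrightarrow> B n \<in> borel_measurable M"
  using distributed_measurable[OF B_exp] by simp

lemma W_rv[measurable]: "W m \<in> borel_measurable M"
proof (induction m rule: induct_nat_012)
  case (ge2 n)
  then show ?case
    using B_rv[of "Suc (Suc n)"] A_rv[of "Suc n"] by (simp add: Wseq.simps(3)[abs_def])
qed (simp_all add: W1_rv)

lemma W_Suc_nonneg: "1 \<le> m \<Longrightarrow> 0 \<le> W (Suc m) \<omega>"
  by (cases m) auto

lemma W_nonneg: "AE \<omega> in M. 0 \<le> W m \<omega>"
proof (cases m)
  case (Suc n)
  then show ?thesis using W1_nonneg W_Suc_nonneg[of n] by (cases n) auto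
qed simp

lemma A_plus_W_nonneg:
  assumes "1 \<le> m" shows "AE \<omega> in M. 0 \<le> A m \<omega> + W m \<omega>"
  using A_nonneg[OF assms] W_nonneg[of m] by eventually_elim simp

lemma alpha_nonneg: "0 \<le> \<alpha>"
  by (rule integral_nonneg_AE) simp

lemma nn_integral_exp_A:
  assumes "1 \<le> m"
  shows "(\<integral>\<^sup>+a. ennreal (exp (- \<mu> * a)) \<partial>distr M borel (A m)) = ennreal \<alpha>"
proof -
  have "integrable M (\<lambda>\<omega>. exp (- \<mu> * A 1 \<omega>))"
  proof (rule integrable_const_bound[where B=1])
    show "AE \<omega> in M. norm (exp (- \<mu> * A 1 \<omega>)) \<le> 1"
      using A_nonneg[OF order_refl] by eventually_elim (use mu_pos in simp)
  qed (use A_rv[of 1] in measurable)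
  then have "(\<integral>\<^sup>+\<omega>. ennreal (exp (- \<mu> * A 1 \<omega>)) \<partial>M) = ennreal \<alpha>"
    by (intro nn_integral_eq_integral) auto
  then show ?thesis
    using A_rv[of 1] by (simp add: A_ident[OF assms] nn_integral_distr)
qed

lemma Wseq_vec_driving_without:
  assumes "1 \<le> m" and "j = Inl m \<or> j = Inr (Inl (Suc m))"
  shows "Wseq_vec m (driving_without j \<omega>) = W m \<omega>"
  unfolding Wseq_eq_Wseq_vec
  by (rule Wseq_vec_cong) (use assms in \<open>auto simp: driving_index_def\<close>)

lemma nn_integral_exp_A_plus_W:
  fixes \<psi> :: "real \<Rightarrow> ennreal"
  assumes m: "1 \<le> m" and [measurable]: "\<psi> \<in> borel_measurable borel"
  shows "(\<integral>\<^sup>+\<omega>. \<psi> (W1 \<omega>) * ennreal (exp (- \<mu> * (A m \<omega> + W m \<omega>))) \<partial>M)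
       = ennreal \<alpha> * (\<integral>\<^sup>+\<omega>. \<psi> (W1 \<omega>) * ennreal (exp (- \<mu> * W m \<omega>)) \<partial>M)"
proof -
  define j where "j = (Inl m :: nat + nat + unit)"
  have j: "j \<in> driving_index" using m by (auto simp: j_def driving_index_def)
  define F where "F = (\<lambda>(x, a). \<psi> (x (Inr (Inr ()))) * ennreal (exp (- \<mu> * (a + Wseq_vec m x))))"
  have F: "F \<in> borel_measurable (PiM (driving_index - {j}) (\<lambda>_. borel) \<Otimes>\<^sub>M borel)"
    unfolding F_def using borel_measurable_component_PiM by measurable
  have R: "driving_without j \<omega> (Inr (Inr ())) = W1 \<omega>" "Wseq_vec m (driving_without j \<omega>) = W m \<omega>" for \<omega>
    using m Wseq_vec_driving_without[OF m] by (auto simp: j_def driving_index_def driving_family_def)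
  have Aj: "driving_family A B W1 j = A m" by (simp add: j_def driving_family_def)
  have "(\<integral>\<^sup>+\<omega>. \<psi> (W1 \<omega>) * ennreal (exp (- \<mu> * (A m \<omega> + W m \<omega>))) \<partial>M)
      = (\<integral>\<^sup>+\<omega>. F (driving_without j \<omega>, driving_family A B W1 j \<omega>) \<partial>M)"
    by (simp only: F_def case_prod_conv R Aj)
  also have "\<dots> = (\<integral>\<^sup>+\<omega>. (\<integral>\<^sup>+a. F (driving_without j \<omega>, a) \<partial>distr M borel (A m)) \<partial>M)"
    using nn_integral_indep_vars_integrate_out[OF indep j F] by (simp only: Aj)
  also have "\<dots> = (\<integral>\<^sup>+\<omega>. \<psi> (W1 \<omega>) * ennreal (exp (- \<mu> * W m \<omega>)) * ennreal \<alpha> \<partial>M)"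
  proof (rule nn_integral_cong)
    fix \<omega>
    have "(\<integral>\<^sup>+a. F (driving_without j \<omega>, a) \<partial>distr M borel (A m))
        = (\<integral>\<^sup>+a. \<psi> (W1 \<omega>) * ennreal (exp (- \<mu> * W m \<omega>)) * ennreal (exp (- \<mu> * a)) \<partial>distr M borel (A m))"
      unfolding F_def case_prod_conv R
      by (intro nn_integral_cong) (simp add: ennreal_mult[symmetric] exp_add[symmetric] algebra_simps)
    also have "\<dots> = \<psi> (W1 \<omega>) * ennreal (exp (- \<mu> * W m \<omega>))
        * (\<integral>\<^sup>+a. ennreal (exp (- \<mu> * a)) \<partial>distr M borel (A m))"
      by (rule nn_integral_cmult) measurable
    finally show "(\<integral>\<^sup>+a. F (driving_without j \<omega>, a) \<partial>distr M borel (A m))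
        = \<psi> (W1 \<omega>) * ennreal (exp (- \<mu> * W m \<omega>)) * ennreal \<alpha>"
      by (simp only: nn_integral_exp_A[OF m])
  qed
  also have "\<dots> = (\<integral>\<^sup>+\<omega>. \<psi> (W1 \<omega>) * ennreal (exp (- \<mu> * W m \<omega>)) \<partial>M) * ennreal \<alpha>"
    by (rule nn_integral_multc) (use W1_rv in measurable)
  finally show ?thesis by (simp only: mult.commute)
qed

lemma nn_integral_distr_B:
  assumes n: "1 \<le> n" and [measurable]: "G \<in> borel_measurable borel"
  shows "(\<integral>\<^sup>+b. G b \<partial>distr M borel (B n)) = (\<integral>\<^sup>+b. ennreal (exponential_density \<mu> b) * G b \<partial>lborel)"
proof -
  have B: "distributed M lborel (B n) (exponential_density \<mu>)" using B_exp[OF n] .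
  have "(\<integral>\<^sup>+b. G b \<partial>distr M borel (B n)) = (\<integral>\<^sup>+b. G b \<partial>distr M lborel (B n))"
    using B_rv[OF n] distributed_measurable[OF B] by (simp add: nn_integral_distr)
  also have "\<dots> = (\<integral>\<^sup>+b. ennreal (exponential_density \<mu> b) * G b \<partial>lborel)"
    using distributed_borel_measurable[OF B]
    by (simp add: distributed_distr_eq_density[OF B] nn_integral_density)
  finally show ?thesis .
qed

lemma nn_integral_W_Suc:
  fixes \<psi> \<phi> :: "real \<Rightarrow> ennreal"
  assumes m: "1 \<le> m" and [measurable]: "\<psi> \<in> borel_measurable borel" "\<phi> \<in> borel_measurable borel"
  shows "(\<integral>\<^sup>+\<omega>. \<psi> (W1 \<omega>) * \<phi> (W (Suc m) \<omega>) \<partial>M)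
       = (\<integral>\<^sup>+\<omega>. \<psi> (W1 \<omega>) *
            (\<integral>\<^sup>+b. ennreal (exponential_density \<mu> b) * \<phi> (max 0 (b - (A m \<omega> + W m \<omega>))) \<partial>lborel) \<partial>M)"
proof -
  define j where "j = (Inr (Inl (Suc m)) :: nat + nat + unit)"
  have j: "j \<in> driving_index" by (auto simp: j_def driving_index_def)
  define F where "F = (\<lambda>(x, b). \<psi> (x (Inr (Inr ()))) * \<phi> (max 0 (b - (x (Inl m) + Wseq_vec m x))))"
  have F: "F \<in> borel_measurable (PiM (driving_index - {j}) (\<lambda>_. borel) \<Otimes>\<^sub>M borel)"
    unfolding F_def using borel_measurable_component_PiM by measurable
  have R: "driving_without j \<omega> (Inr (Inr ())) = W1 \<omega>" "driving_without j \<omega> (Inl m) = A m \<omega>"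
    "Wseq_vec m (driving_without j \<omega>) = W m \<omega>" for \<omega>
    using m Wseq_vec_driving_without[OF m] by (auto simp: j_def driving_index_def driving_family_def)
  have Bj: "driving_family A B W1 j = B (Suc m)" by (simp add: j_def driving_family_def)
  have W_Suc: "W (Suc m) \<omega> = max 0 (B (Suc m) \<omega> - (A m \<omega> + W m \<omega>))" for \<omega>
    using m by (cases m) auto
  have "(\<integral>\<^sup>+\<omega>. \<psi> (W1 \<omega>) * \<phi> (W (Suc m) \<omega>) \<partial>M)
      = (\<integral>\<^sup>+\<omega>. F (driving_without j \<omega>, driving_family A B W1 j \<omega>) \<partial>M)"
    by (simp only: F_def case_prod_conv R Bj W_Suc)
  also have "\<dots> = (\<integral>\<^sup>+\<omega>. (\<integral>\<^sup>+b. F (driving_without j \<omega>, b) \<partial>distr M borel (B (Suc m))) \<partial>M)"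
    using nn_integral_indep_vars_integrate_out[OF indep j F] by (simp only: Bj)
  also have "\<dots> = (\<integral>\<^sup>+\<omega>. \<psi> (W1 \<omega>) *
            (\<integral>\<^sup>+b. ennreal (exponential_density \<mu> b) * \<phi> (max 0 (b - (A m \<omega> + W m \<omega>))) \<partial>lborel) \<partial>M)"
  proof (rule nn_integral_cong)
    fix \<omega>
    have "(\<integral>\<^sup>+b. F (driving_without j \<omega>, b) \<partial>distr M borel (B (Suc m)))
        = (\<integral>\<^sup>+b. ennreal (exponential_density \<mu> b) * (\<psi> (W1 \<omega>) * \<phi> (max 0 (b - (A m \<omega> + W m \<omega>)))) \<partial>lborel)"
      unfolding F_def case_prod_conv R by (rule nn_integral_distr_B) (use m in measurable)
    also have "\<dots> = \<psi> (W1 \<omega>) *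
        (\<integral>\<^sup>+b. ennreal (exponential_density \<mu> b) * \<phi> (max 0 (b - (A m \<omega> + W m \<omega>))) \<partial>lborel)"
      by (subst nn_integral_cmult[symmetric]) (auto simp: mult_ac)
    finally show "(\<integral>\<^sup>+b. F (driving_without j \<omega>, b) \<partial>distr M borel (B (Suc m))) = \<dots>" .
  qed
  finally show ?thesis .
qed

lemma nn_integral_W_Suc_proportional:
  fixes \<psi> \<phi> :: "real \<Rightarrow> ennreal"
  assumes m: "1 \<le> m" and [measurable]: "\<psi> \<in> borel_measurable borel" "\<phi> \<in> borel_measurable borel"
    and \<kappa>: "0 \<le> \<kappa>"
    and \<phi>_integral: "\<And>c. 0 \<le> c \<Longrightarrow>
      (\<integral>\<^sup>+b. ennreal (exponential_density \<mu> b) * \<phi> (max 0 (b - c)) \<partial>lborel) = ennreal (\<kappa> * exp (- \<mu> * c))"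
  shows "(\<integral>\<^sup>+\<omega>. \<psi> (W1 \<omega>) * \<phi> (W (Suc m) \<omega>) \<partial>M)
       = ennreal (\<kappa> * \<alpha>) * (\<integral>\<^sup>+\<omega>. \<psi> (W1 \<omega>) * ennreal (exp (- \<mu> * W m \<omega>)) \<partial>M)"
proof -
  have "(\<integral>\<^sup>+\<omega>. \<psi> (W1 \<omega>) * \<phi> (W (Suc m) \<omega>) \<partial>M)
      = (\<integral>\<^sup>+\<omega>. \<psi> (W1 \<omega>) *
           (\<integral>\<^sup>+b. ennreal (exponential_density \<mu> b) * \<phi> (max 0 (b - (A m \<omega> + W m \<omega>))) \<partial>lborel) \<partial>M)"
    by (rule nn_integral_W_Suc[OF m]) measurable
  also have "\<dots> = (\<integral>\<^sup>+\<omega>. ennreal \<kappa> * (\<psi> (W1 \<omega>) * ennreal (exp (- \<mu> * (A m \<omega> + W m \<omega>)))) \<partial>M)"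
    using A_plus_W_nonneg[OF m]
    by (intro nn_integral_cong_AE, eventually_elim) (simp add: \<phi>_integral \<kappa> ennreal_mult mult_ac)
  also have "\<dots> = ennreal \<kappa> * (ennreal \<alpha> * (\<integral>\<^sup>+\<omega>. \<psi> (W1 \<omega>) * ennreal (exp (- \<mu> * W m \<omega>)) \<partial>M))"
    using A_rv[OF m] W1_rv nn_integral_exp_A_plus_W[OF m, of \<psi>] by (simp add: nn_integral_cmult)
  finally show ?thesis by (simp add: \<kappa> ennreal_mult mult.assoc)
qed

lemma nn_integral_mult_W_Suc:
  fixes \<psi> :: "real \<Rightarrow> ennreal"
  assumes m: "1 \<le> m" and [measurable]: "\<psi> \<in> borel_measurable borel"
  shows "(\<integral>\<^sup>+\<omega>. \<psi> (W1 \<omega>) * ennreal (W (Suc m) \<omega>) \<partial>M)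
       = ennreal (\<alpha> / \<mu>) * (\<integral>\<^sup>+\<omega>. \<psi> (W1 \<omega>) * ennreal (exp (- \<mu> * W m \<omega>)) \<partial>M)"
  using nn_integral_W_Suc_proportional[OF m, of \<psi> ennreal "1 / \<mu>"] mu_pos
    nn_integral_exponential_density_pos_part_id[OF mu_pos]
  by simp

lemma nn_integral_mult_W_exp_W_Suc:
  fixes \<psi> :: "real \<Rightarrow> ennreal"
  assumes m: "1 \<le> m" and [measurable]: "\<psi> \<in> borel_measurable borel"
  shows "(\<integral>\<^sup>+\<omega>. \<psi> (W1 \<omega>) * ennreal (W (Suc m) \<omega> * exp (- \<mu> * W (Suc m) \<omega>)) \<partial>M)
       = ennreal (\<alpha> / (4 * \<mu>)) * (\<integral>\<^sup>+\<omega>. \<psi> (W1 \<omega>) * ennreal (exp (- \<mu> * W m \<omega>)) \<partial>M)"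
  using nn_integral_W_Suc_proportional[OF m, of \<psi> "\<lambda>x. ennreal (x * exp (- \<mu> * x))" "1 / (4 * \<mu>)"] mu_pos
    nn_integral_exponential_density_pos_part_mult_exp[OF mu_pos]
  by simp

lemma nn_integral_mult_exp_W_Suc_integrate_B:
  fixes \<psi> :: "real \<Rightarrow> ennreal"
  assumes m: "1 \<le> m" and [measurable]: "\<psi> \<in> borel_measurable borel"
  shows "(\<integral>\<^sup>+\<omega>. \<psi> (W1 \<omega>) * ennreal (exp (- \<mu> * W (Suc m) \<omega>)) \<partial>M)
       = (\<integral>\<^sup>+\<omega>. \<psi> (W1 \<omega>) * ennreal (1 - exp (- \<mu> * (A m \<omega> + W m \<omega>)) / 2) \<partial>M)"
proof -
  have "(\<integral>\<^sup>+\<omega>. \<psi> (W1 \<omega>) * ennreal (exp (- \<mu> * W (Suc m) \<omega>)) \<partial>M)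
      = (\<integral>\<^sup>+\<omega>. \<psi> (W1 \<omega>) * (\<integral>\<^sup>+b. ennreal (exponential_density \<mu> b)
           * ennreal (exp (- \<mu> * max 0 (b - (A m \<omega> + W m \<omega>)))) \<partial>lborel) \<partial>M)"
    by (rule nn_integral_W_Suc[OF m]) measurable
  also have "\<dots> = (\<integral>\<^sup>+\<omega>. \<psi> (W1 \<omega>) * ennreal (1 - exp (- \<mu> * (A m \<omega> + W m \<omega>)) / 2) \<partial>M)"
    using A_plus_W_nonneg[OF m]
    by (intro nn_integral_cong_AE, eventually_elim)
      (simp only: nn_integral_exponential_density_exp_pos_part[OF mu_pos])
  finally show ?thesis .
qed

lemma nn_integral_mult_exp_W_Suc:
  fixes \<psi> :: "real \<Rightarrow> ennreal"
  assumes m: "1 \<le> m" and [measurable]: "\<psi> \<in> borel_measurable borel"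
  shows "(\<integral>\<^sup>+\<omega>. \<psi> (W1 \<omega>) * ennreal (exp (- \<mu> * W (Suc m) \<omega>)) \<partial>M)
         + ennreal (\<alpha> / 2) * (\<integral>\<^sup>+\<omega>. \<psi> (W1 \<omega>) * ennreal (exp (- \<mu> * W m \<omega>)) \<partial>M)
       = (\<integral>\<^sup>+\<omega>. \<psi> (W1 \<omega>) \<partial>M)"
proof -
  note [measurable] = W1_rv A_rv[OF m]
  have "ennreal (\<alpha> / 2) * (\<integral>\<^sup>+\<omega>. \<psi> (W1 \<omega>) * ennreal (exp (- \<mu> * W m \<omega>)) \<partial>M)
      = ennreal (1 / 2) * (\<integral>\<^sup>+\<omega>. \<psi> (W1 \<omega>) * ennreal (exp (- \<mu> * (A m \<omega> + W m \<omega>))) \<partial>M)"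
    using alpha_nonneg
    by (simp only: nn_integral_exp_A_plus_W[OF m assms(2)] ennreal_mult[symmetric] mult.assoc)
      (simp add: ennreal_mult[symmetric] mult.assoc[symmetric] del: ennreal_half)
  also have "\<dots> = (\<integral>\<^sup>+\<omega>. \<psi> (W1 \<omega>) * ennreal (exp (- \<mu> * (A m \<omega> + W m \<omega>)) / 2) \<partial>M)"
    by (subst nn_integral_cmult[symmetric])
      (auto simp: ennreal_mult'[symmetric] mult_ac simp del: ennreal_half)
  finally have exp_W: "ennreal (\<alpha> / 2) * (\<integral>\<^sup>+\<omega>. \<psi> (W1 \<omega>) * ennreal (exp (- \<mu> * W m \<omega>)) \<partial>M)
      = \<dots>" .
  have "(\<integral>\<^sup>+\<omega>. \<psi> (W1 \<omega>) * ennreal (1 - exp (- \<mu> * (A m \<omega> + W m \<omega>)) / 2) \<partial>M)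
      + (\<integral>\<^sup>+\<omega>. \<psi> (W1 \<omega>) * ennreal (exp (- \<mu> * (A m \<omega> + W m \<omega>)) / 2) \<partial>M)
      = (\<integral>\<^sup>+\<omega>. \<psi> (W1 \<omega>) \<partial>M)"
  proof (subst nn_integral_add[symmetric], measurable, rule nn_integral_cong_AE)
    show "AE \<omega> in M. \<psi> (W1 \<omega>) * ennreal (1 - exp (- \<mu> * (A m \<omega> + W m \<omega>)) / 2)
        + \<psi> (W1 \<omega>) * ennreal (exp (- \<mu> * (A m \<omega> + W m \<omega>)) / 2) = \<psi> (W1 \<omega>)"
      using A_plus_W_nonneg[OF m]
    proof eventually_elim
      case (elim \<omega>)
      define e where "e = exp (- \<mu> * (A m \<omega> + W m \<omega>))"
      have "0 \<le> e" "e \<le> 1" using elim mu_pos by (simp_all add: e_def)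
      then have "ennreal (1 - e / 2) + ennreal (e / 2) = 1"
        by (subst ennreal_plus[symmetric]) (auto simp: e_def[symmetric])
      then show ?case by (simp only: e_def[symmetric] distrib_left[symmetric] mult_1_right)
    qed
  qed
  then show ?thesis by (simp only: nn_integral_mult_exp_W_Suc_integrate_B[OF m assms(2)] exp_W)
qed

lemma integrable_mult_exp_W:
  assumes "integrable M f"
  shows "integrable M (\<lambda>\<omega>. f \<omega> * exp (- \<mu> * W m \<omega>))"
proof (rule Bochner_Integration.integrable_bound[OF assms])
  show "AE \<omega> in M. norm (f \<omega> * exp (- \<mu> * W m \<omega>)) \<le> norm (f \<omega>)"
    using W_nonneg[of m] by eventually_elim (use mu_pos in \<open>simp add: abs_mult mult_left_le\<close>)
qed (use assms in measurable)

end

section \<open>The stationary process\<close>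

lemma stationary_process_nn_integral_shift:
  assumes stat: "stationary_process M X" and i: "1 \<le> i"
    and [measurable]: "X i \<in> borel_measurable M" "X (i + m) \<in> borel_measurable M"
      "h \<in> borel_measurable borel"
  shows "(\<integral>\<^sup>+\<omega>. h (X (i + m) \<omega>) \<partial>M) = (\<integral>\<^sup>+\<omega>. h (X i \<omega>) \<partial>M)"
proof -
  have shift: "distr M (PiM {i} (\<lambda>_. borel)) (\<lambda>\<omega>. \<lambda>n\<in>{i}. X (n + m) \<omega>)
      = distr M (PiM {i} (\<lambda>_. borel)) (\<lambda>\<omega>. \<lambda>n\<in>{i}. X n \<omega>)"
    using stat i unfolding stationary_process_def by auto
  have "(\<integral>\<^sup>+\<omega>. h (X (i + m) \<omega>) \<partial>M)
      = (\<integral>\<^sup>+f. h (f i) \<partial>distr M (PiM {i} (\<lambda>_. borel)) (\<lambda>\<omega>. \<lambda>n\<in>{i}. X (n + m) \<omega>))"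
    by (subst nn_integral_distr) (auto intro!: measurable_restrict)
  also have "\<dots> = (\<integral>\<^sup>+\<omega>. h (X i \<omega>) \<partial>M)"
    unfolding shift by (subst nn_integral_distr) (auto intro!: measurable_restrict)
  finally show ?thesis .
qed

lemma (in prob_space) covariance_eq:
  assumes X: "integrable M X" and Y: "integrable M Y" and XY: "integrable M (\<lambda>\<omega>. X \<omega> * Y \<omega>)"
  shows "covariance M X Y = (\<integral>\<omega>. X \<omega> * Y \<omega> \<partial>M) - expectation X * expectation Y"
proof -
  have "covariance M X Y
      = (\<integral>\<omega>. (X \<omega> * Y \<omega> - expectation Y * X \<omega>)
              - (expectation X * Y \<omega> - expectation X * expectation Y) \<partial>M)"
    unfolding covariance_def by (rule Bochner_Integration.integral_cong) (auto simp: algebra_simps)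
  also have "\<dots> = (\<integral>\<omega>. X \<omega> * Y \<omega> \<partial>M) - expectation X * expectation Y"
    using X Y XY by (simp add: prob_space)
  finally show ?thesis .
qed

lemma ennreal_add_mult_eqD:
  fixes x y r c :: real
  assumes "0 \<le> x" "0 \<le> y" "0 \<le> r" "0 \<le> c" and "ennreal x + ennreal r * ennreal y = ennreal c"
  shows "x + r * y = c"
  using assms by (simp add: ennreal_mult[symmetric] ennreal_plus[symmetric] del: ennreal_plus)

lemma affine_recurrence_closed_form:
  fixes x :: "nat \<Rightarrow> real"
  assumes rec: "\<And>m. 1 \<le> m \<Longrightarrow> x (Suc m) + r * x m = c" and r: "1 + r \<noteq> 0" and m: "1 \<le> m"
  shows "x m = c / (1 + r) + (- r) ^ (m - 1) * (x 1 - c / (1 + r))"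
  using m
proof (induction m rule: dec_induct)
  case (step n)
  then obtain n' where n: "n = Suc n'" by (cases n) auto
  have "x (Suc n) = c - r * x n" using rec[OF step(1)] by simp
  also have "\<dots> = c - r * (c / (1 + r) + (- r) ^ n' * (x 1 - c / (1 + r)))"
    using step(3) n by simp
  also have "\<dots> = c / (1 + r) + (- r) ^ n * (x 1 - c / (1 + r))"
  proof -
    have "c - r * (c / (1 + r)) = c / (1 + r)" using r by (simp add: field_simps)
    then show ?thesis by (simp add: n algebra_simps)
  qed
  finally show ?case by simp
qed simp

locale stationary_driving_model = driving_model +
  assumes stat: "stationary_process M (Wseq A B W1)"
begin

text \<open>\<rho> is the stationary probability P[W 1 > 0].\<close>

definition \<rho> :: real where "\<rho> = 2 * \<alpha> / (2 + \<alpha>)"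

lemma rho_nonneg: "0 \<le> \<rho>" and half_rho_le_1: "\<rho> / 2 \<le> 1"
  and alpha_mult_rho: "\<alpha> * (1 - \<rho> / 2) = \<rho>"
  and inverse_one_plus_half_alpha: "1 / (1 + \<alpha> / 2) = 1 - \<rho> / 2"
proof -
  have "0 < 2 + \<alpha>" using alpha_nonneg by linarith
  then show "0 \<le> \<rho>" "\<rho> / 2 \<le> 1" "\<alpha> * (1 - \<rho> / 2) = \<rho>" "1 / (1 + \<alpha> / 2) = 1 - \<rho> / 2"
    using alpha_nonneg unfolding \<rho>_def by (simp_all add: field_simps)
qed

lemma nn_integral_W2_eq_W1:
  assumes "h \<in> borel_measurable borel"
  shows "(\<integral>\<^sup>+\<omega>. h (W 2 \<omega>) \<partial>M) = (\<integral>\<^sup>+\<omega>. h (W 1 \<omega>) \<partial>M)"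
  using stationary_process_nn_integral_shift[OF stat order_refl W_rv W_rv assms, of 1]
  by (simp only: one_add_one)

lemma integral_exp_W:
  assumes "1 \<le> m"
  shows "(\<integral>\<omega>. exp (- \<mu> * W m \<omega>) \<partial>M) = 1 - \<rho> / 2"
proof -
  define g where "g m = (\<integral>\<omega>. exp (- \<mu> * W m \<omega>) \<partial>M)" for m
  have nn: "(\<integral>\<^sup>+\<omega>. 1 * ennreal (exp (- \<mu> * W m \<omega>)) \<partial>M) = ennreal (g m)" for m
    unfolding g_def using integrable_mult_exp_W[of "\<lambda>_. 1" m]
    by (simp add: nn_integral_eq_integral)
  have g_nonneg: "0 \<le> g m" for m unfolding g_def by simp
  have rec: "g (Suc m) + \<alpha> / 2 * g m = 1" if "1 \<le> m" for m
  proof -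
    have "ennreal (g (Suc m)) + ennreal (\<alpha> / 2) * ennreal (g m) = (\<integral>\<^sup>+\<omega>. 1 \<partial>M)"
      using nn_integral_mult_exp_W_Suc[OF that measurable_const, of 1]
      by (simp only: nn space_borel UNIV_I)
    then have "ennreal (g (Suc m)) + ennreal (\<alpha> / 2) * ennreal (g m) = 1"
      by (simp add: emeasure_space_1 del: ennreal_half)
    then show ?thesis
      using g_nonneg alpha_nonneg by (intro ennreal_add_mult_eqD) (auto simp del: ennreal_half)
  qed
  txt \<open>Stationarity pins the solution of the recursion to its fixed point.\<close>
  have "g 2 = g 1"
    using nn_integral_W2_eq_W1[of "\<lambda>x. ennreal (exp (- \<mu> * x))"] nn[of 2] nn[of 1] g_nonneg by simp
  then have "g 1 * (1 + \<alpha> / 2) = 1"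
    using rec[of 1] by (simp add: algebra_simps numeral_2_eq_2)
  moreover have ne: "1 + \<alpha> / 2 \<noteq> 0" using alpha_nonneg by linarith
  ultimately have g1: "g 1 = 1 / (1 + \<alpha> / 2)" by (simp add: eq_divide_eq)
  have "g m = 1 / (1 + \<alpha> / 2)"
    using affine_recurrence_closed_form[of g "\<alpha> / 2" 1, OF rec ne assms] g1 by simp
  also have "\<dots> = 1 - \<rho> / 2"
    by (rule inverse_one_plus_half_alpha)
  finally show ?thesis unfolding g_def .
qed

lemma nn_integral_exp_W:
  assumes "1 \<le> m"
  shows "(\<integral>\<^sup>+\<omega>. ennreal (exp (- \<mu> * W m \<omega>)) \<partial>M) = ennreal (1 - \<rho> / 2)"
  using integrable_mult_exp_W[of "\<lambda>_. 1" m] integral_exp_W[OF assms]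
  by (simp add: nn_integral_eq_integral)

lemma nn_integral_W:
  assumes "1 \<le> m"
  shows "(\<integral>\<^sup>+\<omega>. ennreal (W m \<omega>) \<partial>M) = ennreal (\<rho> / \<mu>)"
proof -
  have Suc: "(\<integral>\<^sup>+\<omega>. ennreal (W (Suc n) \<omega>) \<partial>M) = ennreal (\<rho> / \<mu>)" if "1 \<le> n" for n
  proof -
    have "(\<integral>\<^sup>+\<omega>. ennreal (W (Suc n) \<omega>) \<partial>M) = ennreal (\<alpha> / \<mu>) * ennreal (1 - \<rho> / 2)"
      using nn_integral_mult_W_Suc[OF that measurable_const, of 1]
      by (simp only: nn_integral_exp_W[OF that] mult_1 space_borel UNIV_I)
    also have "\<dots> = ennreal (\<alpha> * (1 - \<rho> / 2) / \<mu>)"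
      using alpha_nonneg mu_pos half_rho_le_1 by (subst ennreal_mult[symmetric]) auto
    also have "\<dots> = ennreal (\<rho> / \<mu>)"
      by (simp only: alpha_mult_rho)
    finally show ?thesis .
  qed
  show ?thesis
  proof (cases "m = 1")
    case True
    then show ?thesis using nn_integral_W2_eq_W1[of ennreal] Suc[of 1] by (simp add: numeral_2_eq_2)
  next
    case False
    then obtain n where "m = Suc n" "1 \<le> n" using assms by (cases m) auto
    then show ?thesis using Suc by simp
  qed
qed

lemma integrable_W: "1 \<le> m \<Longrightarrow> integrable M (W m)"
  and integral_W: "1 \<le> m \<Longrightarrow> (\<integral>\<omega>. W m \<omega> \<partial>M) = \<rho> / \<mu>"
  using nn_integral_eq_integrable[of "W m" M "\<rho> / \<mu>"] nn_integral_W[of m] W_nonneg[of m]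
    rho_nonneg mu_pos by auto

lemma integrable_W1: "integrable M W1"
  using integrable_W[of 1] by simp

lemma nn_integral_W1_mult_exp_W:
  "(\<integral>\<^sup>+\<omega>. ennreal (W1 \<omega>) * ennreal (exp (- \<mu> * W m \<omega>)) \<partial>M)
     = ennreal (\<integral>\<omega>. W1 \<omega> * exp (- \<mu> * W m \<omega>) \<partial>M)"
proof -
  have "(\<integral>\<^sup>+\<omega>. ennreal (W1 \<omega>) * ennreal (exp (- \<mu> * W m \<omega>)) \<partial>M)
      = (\<integral>\<^sup>+\<omega>. ennreal (W1 \<omega> * exp (- \<mu> * W m \<omega>)) \<partial>M)"
    by (simp add: ennreal_mult'')
  also have "\<dots> = ennreal (\<integral>\<omega>. W1 \<omega> * exp (- \<mu> * W m \<omega>) \<partial>M)"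
    using integrable_mult_exp_W[OF integrable_W1, of m] W1_nonneg
    by (intro nn_integral_eq_integral) (auto elim!: eventually_mono)
  finally show ?thesis .
qed

lemma W1_mult_exp_W_recursion:
  assumes "1 \<le> m"
  shows "(\<integral>\<omega>. W1 \<omega> * exp (- \<mu> * W (Suc m) \<omega>) \<partial>M) + \<alpha> / 2 * (\<integral>\<omega>. W1 \<omega> * exp (- \<mu> * W m \<omega>) \<partial>M)
       = \<rho> / \<mu>"
proof (rule ennreal_add_mult_eqD)
  show "ennreal (\<integral>\<omega>. W1 \<omega> * exp (- \<mu> * W (Suc m) \<omega>) \<partial>M)
      + ennreal (\<alpha> / 2) * ennreal (\<integral>\<omega>. W1 \<omega> * exp (- \<mu> * W m \<omega>) \<partial>M) = ennreal (\<rho> / \<mu>)"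
    using nn_integral_mult_exp_W_Suc[OF assms, of ennreal] nn_integral_W[of 1]
    by (simp only: nn_integral_W1_mult_exp_W measurable_ennreal) simp
qed (use W1_nonneg alpha_nonneg rho_nonneg mu_pos in
  \<open>auto intro!: integral_nonneg_AE elim!: eventually_mono\<close>)

lemma integral_W1_mult_exp_W1:
  "(\<integral>\<omega>. W1 \<omega> * exp (- \<mu> * W 1 \<omega>) \<partial>M) = \<rho> / (4 * \<mu>)"
proof -
  have "ennreal (\<integral>\<omega>. W1 \<omega> * exp (- \<mu> * W 1 \<omega>) \<partial>M)
      = (\<integral>\<^sup>+\<omega>. ennreal (W 2 \<omega> * exp (- \<mu> * W 2 \<omega>)) \<partial>M)"
    using nn_integral_W2_eq_W1[of "\<lambda>x. ennreal (x * exp (- \<mu> * x))"] nn_integral_W1_mult_exp_W[of 1]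
    by (simp add: ennreal_mult'')
  also have "\<dots> = ennreal (\<alpha> / (4 * \<mu>)) * ennreal (1 - \<rho> / 2)"
    using nn_integral_mult_W_exp_W_Suc[of 1 "\<lambda>_. 1"] nn_integral_exp_W[of 1]
    by (simp only: numeral_2_eq_2 mult_1 order_refl measurable_const space_borel UNIV_I One_nat_def)
  also have "\<dots> = ennreal (\<alpha> * (1 - \<rho> / 2) / (4 * \<mu>))"
    using alpha_nonneg mu_pos half_rho_le_1 by (subst ennreal_mult[symmetric]) auto
  also have "\<dots> = ennreal (\<rho> / (4 * \<mu>))"
    by (simp only: alpha_mult_rho)
  finally show ?thesis
    using W1_nonneg rho_nonneg mu_pos
    by (subst (asm) ennreal_inj) (auto intro!: integral_nonneg_AE elim!: eventually_mono)
qed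

lemma integral_W1_mult_exp_W:
  assumes "1 \<le> m"
  shows "(\<integral>\<omega>. W1 \<omega> * exp (- \<mu> * W m \<omega>) \<partial>M)
       = \<rho> / \<mu> * (1 - \<rho> / 2 + (\<rho> / 2 - 3 / 4) * (- \<alpha> / 2) ^ (m - 1))"
proof -
  define a where "a m = (\<integral>\<omega>. W1 \<omega> * exp (- \<mu> * W m \<omega>) \<partial>M)" for m
  have a1: "a 1 = \<rho> / (4 * \<mu>)" unfolding a_def by (rule integral_W1_mult_exp_W1)
  have ne: "1 + \<alpha> / 2 \<noteq> 0" using alpha_nonneg by linarith
  have fixed_point: "\<rho> / \<mu> / (1 + \<alpha> / 2) = \<rho> / \<mu> * (1 - \<rho> / 2)"
    by (simp only: inverse_one_plus_half_alpha[symmetric] times_divide_eq_right mult_1_right)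
  have "a m = \<rho> / \<mu> / (1 + \<alpha> / 2) + (- (\<alpha> / 2)) ^ (m - 1) * (a 1 - \<rho> / \<mu> / (1 + \<alpha> / 2))"
    using W1_mult_exp_W_recursion unfolding a_def by (rule affine_recurrence_closed_form[OF _ ne assms])
  also have "\<dots> = \<rho> / \<mu> * (1 - \<rho> / 2 + (\<rho> / 2 - 3 / 4) * (- \<alpha> / 2) ^ (m - 1))"
    unfolding fixed_point a1 using mu_pos by (simp add: field_simps)
  finally show ?thesis unfolding a_def .
qed

lemma integrable_W1_mult_W: "1 \<le> k \<Longrightarrow> integrable M (\<lambda>\<omega>. W 1 \<omega> * W (1 + k) \<omega>)"
  and integral_W1_mult_W: "1 \<le> k \<Longrightarrow>
    (\<integral>\<omega>. W 1 \<omega> * W (1 + k) \<omega> \<partial>M) = \<alpha> / \<mu> * (\<integral>\<omega>. W1 \<omega> * exp (- \<mu> * W k \<omega>) \<partial>M)"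
proof -
  assume k: "1 \<le> k"
  define E where "E = (\<integral>\<omega>. W1 \<omega> * exp (- \<mu> * W k \<omega>) \<partial>M)"
  have E_nonneg: "0 \<le> E"
    unfolding E_def using W1_nonneg by (intro integral_nonneg_AE) (auto elim!: eventually_mono)
  have "(\<integral>\<^sup>+\<omega>. ennreal (W 1 \<omega> * W (1 + k) \<omega>) \<partial>M)
      = (\<integral>\<^sup>+\<omega>. ennreal (W1 \<omega>) * ennreal (W (Suc k) \<omega>) \<partial>M)"
    using W1_nonneg W_Suc_nonneg[OF k]
    by (intro nn_integral_cong_AE) (auto elim!: eventually_mono simp: ennreal_mult)
  also have "\<dots> = ennreal (\<alpha> / \<mu>) * ennreal E"
    using nn_integral_mult_W_Suc[OF k measurable_ennreal] by (simp only: E_def nn_integral_W1_mult_exp_W)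
  also have "\<dots> = ennreal (\<alpha> / \<mu> * E)"
    using alpha_nonneg mu_pos E_nonneg by (intro ennreal_mult[symmetric]) auto
  finally have nn: "(\<integral>\<^sup>+\<omega>. ennreal (W 1 \<omega> * W (1 + k) \<omega>) \<partial>M) = ennreal (\<alpha> / \<mu> * E)" .
  have "AE \<omega> in M. 0 \<le> W 1 \<omega> * W (1 + k) \<omega>"
    using W1_nonneg W_Suc_nonneg[OF k] by (auto elim!: eventually_mono)
  from nn_integral_eq_integrable[OF borel_measurable_times[OF W_rv W_rv] this, of "\<alpha> / \<mu> * E"]
  show "integrable M (\<lambda>\<omega>. W 1 \<omega> * W (1 + k) \<omega>)"
    and "(\<integral>\<omega>. W 1 \<omega> * W (1 + k) \<omega> \<partial>M) = \<alpha> / \<mu> * (\<integral>\<omega>. W1 \<omega> * exp (- \<mu> * W k \<omega>) \<partial>M)"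
    using nn alpha_nonneg mu_pos E_nonneg unfolding E_def by auto
qed

lemma covariance_W:
  assumes "1 \<le> k"
  shows "covariance M (W 1) (W (1 + k)) = \<rho> * (3 / 2 - \<rho>) * (1 / \<mu>^2) * (- \<alpha> / 2) ^ k"
proof -
  obtain j where k: "k = Suc j" using assms by (cases k) auto
  define q where "q = (- \<alpha> / 2) ^ k"
  have "\<alpha> * (\<integral>\<omega>. W1 \<omega> * exp (- \<mu> * W k \<omega>) \<partial>M)
      = \<rho> / \<mu> * (\<alpha> * (1 - \<rho> / 2) + (\<rho> / 2 - 3 / 4) * (\<alpha> * (- \<alpha> / 2) ^ j))"
    unfolding integral_W1_mult_exp_W[OF assms] using k by (simp add: algebra_simps)
  also have "\<alpha> * (- \<alpha> / 2) ^ j = - 2 * q" unfolding q_def k by simp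
  finally have "\<alpha> * (\<integral>\<omega>. W1 \<omega> * exp (- \<mu> * W k \<omega>) \<partial>M) = \<rho> / \<mu> * (\<rho> - 2 * (\<rho> / 2 - 3 / 4) * q)"
    by (simp only: alpha_mult_rho) simp
  then have product: "(\<integral>\<omega>. W 1 \<omega> * W (1 + k) \<omega> \<partial>M) = \<rho> * (\<rho> - 2 * (\<rho> / 2 - 3 / 4) * q) / \<mu>^2"
    unfolding integral_W1_mult_W[OF assms] by (simp add: power2_eq_square)
  have "covariance M (W 1) (W (1 + k))
      = (\<integral>\<omega>. W 1 \<omega> * W (1 + k) \<omega> \<partial>M) - expectation (W 1) * expectation (W (1 + k))"
    by (rule covariance_eq[OF integrable_W integrable_W integrable_W1_mult_W[OF assms]]) simp_all
  also have "\<dots> = (\<rho> * (\<rho> - 2 * (\<rho> / 2 - 3 / 4) * q) - \<rho> * \<rho>) / \<mu>^2"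
    unfolding product integral_W[OF order_refl] integral_W[OF le_add1]
    by (simp add: power2_eq_square diff_divide_distrib)
  also have "\<dots> = \<rho> * (3 / 2 - \<rho>) * (1 / \<mu>^2) * q"
    using mu_pos by (simp add: field_simps)
  finally show ?thesis unfolding q_def .
qed

end

theorem corollary3p5:
  fixes M :: "'a measure" and A B :: "nat \<Rightarrow> 'a \<Rightarrow> real" and W1 :: "'a \<Rightarrow> real"
    and \<mu> :: real
  assumes "prob_space M"
    and "\<mu> > 0"
    and A_rv: "\<And>n. n \<ge> 1 \<Longrightarrow> A n \<in> borel_measurable M"
    and A_nonneg: "\<And>n. n \<ge> 1 \<Longrightarrow> AE \<omega> in M. A n \<omega> \<ge> 0"
    and A_ident: "\<And>n. n \<ge> 1 \<Longrightarrow> distr M borel (A n) = distr M borel (A 1)"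
    and B_exp: "\<And>n. n \<ge> 1 \<Longrightarrow> distributed M lborel (B n) (exponential_density \<mu>)"
    and W1_rv: "W1 \<in> borel_measurable M"
    and W1_nonneg: "AE \<omega> in M. W1 \<omega> \<ge> 0"
    and indep: "prob_space.indep_vars M (\<lambda>_. borel) (driving_family A B W1) driving_index"
    and stat: "stationary_process M (Wseq A B W1)"
    and k: "k \<ge> 1"
  shows "(let \<alpha> = (\<integral>\<omega>. exp (- \<mu> * A 1 \<omega>) \<partial>M) in
          covariance M (Wseq A B W1 1) (Wseq A B W1 (1 + k))
          = (2 * \<alpha> / (2 + \<alpha>)) * (3 / 2 - 2 * \<alpha> / (2 + \<alpha>)) * (1 / \<mu>^2) * (- \<alpha> / 2) ^ k)"
proof -
  interpret driving_model M A B W1 \<mu>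
    using assms(2-9) by (intro driving_model.intro[OF assms(1)] driving_model_axioms.intro) assumption+
  interpret stationary_driving_model M A B W1 \<mu>
    by unfold_locales (rule stat)
  show ?thesis
    using covariance_W[OF k] unfolding Let_def \<rho>_def .
qed

end
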